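(* For every pair $(k,\ell)$ of positive integers and every prime power $q$, there is a constant $f(k,\ell,q)$ such that every simple, cosimple, $GF(q)$-representable $(k,\ell)$-uniform matroid $M$ satisfies $r(M)\leq f(k,\ell,q)$. Moreover, taking $f(k,\ell,q)$ to be the maximum rank of such a matroid, if $k\geq 2$ then $$f(k,\ell,q)\leq \max\{f(k-1,\ell+1,q),\ f(1,\ell,q)+(k-1)\}.$$
   Context: For positive integers $k,\ell$, a matroid is $(k,\ell)$-uniform if it has no minor isomorphic to $U_{k,k}\oplus U_{0,\ell}$. A matroid is cosimple if its dual is simple. *)

theory Defs
  imports "HOL-Algebra.Ring" "HOL-Computational_Algebra.Primes"
begin

definition matroid :: "'a set \<Rightarrow> ('a set \<Rightarrow> bool) \<Rightarrow> bool" where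
  "matroid E I \<longleftrightarrow> finite E \<and> I {} \<and> (\<forall>X. I X \<longrightarrow> X \<subseteq> E)
     \<and> (\<forall>X Y. I Y \<and> X \<subseteq> Y \<longrightarrow> I X)
     \<and> (\<forall>X Y. I X \<and> I Y \<and> card X < card Y \<longrightarrow> (\<exists>y\<in>Y - X. I (insert y X)))"

definition basis_of :: "('a set \<Rightarrow> bool) \<Rightarrow> 'a set \<Rightarrow> 'a set \<Rightarrow> bool" where
  "basis_of I C B \<longleftrightarrow> B \<subseteq> C \<and> I B \<and> (\<forall>x\<in>C - B. \<not> I (insert x B))"

definition matroid_rank :: "'a set \<Rightarrow> ('a set \<Rightarrow> bool) \<Rightarrow> nat" where
  "matroid_rank E I = Max (card ` {X. X \<subseteq> E \<and> I X})"

definition dual_indep :: "'a set \<Rightarrow> ('a set \<Rightarrow> bool) \<Rightarrow> 'a set \<Rightarrow> bool" where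
  "dual_indep E I X \<longleftrightarrow> X \<subseteq> E \<and> (\<exists>B. basis_of I E B \<and> X \<inter> B = {})"

text \<open>Simple: no loops and no parallel pairs, i.e. every set of at most two elements is independent.\<close>
definition simple_matroid :: "'a set \<Rightarrow> ('a set \<Rightarrow> bool) \<Rightarrow> bool" where
  "simple_matroid E I \<longleftrightarrow> (\<forall>x\<in>E. \<forall>y\<in>E. I {x, y})"

definition cosimple_matroid :: "'a set \<Rightarrow> ('a set \<Rightarrow> bool) \<Rightarrow> bool" where
  "cosimple_matroid E I \<longleftrightarrow> simple_matroid E (dual_indep E I)"

text \<open>Independent sets of the minor M / C \ D (C, D disjoint subsets of E):
  X \<subseteq> E - (C \<union> D) is independent iff X \<union> B is independent for a basis B of C.\<close>
definition minor_indep :: "('a set \<Rightarrow> bool) \<Rightarrow> 'a set \<Rightarrow> 'a set \<Rightarrow> 'a set \<Rightarrow> bool" where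
  "minor_indep I C D X \<longleftrightarrow> X \<inter> (C \<union> D) = {} \<and> (\<exists>B. basis_of I C B \<and> I (X \<union> B))"

text \<open>M has a minor isomorphic to U_{k,k} \<oplus> U_{0,l}: a minor whose ground set splits into
  a k-set A and an l-set L such that the independent sets are exactly the subsets of A.\<close>
definition has_Ukk_U0l_minor :: "'a set \<Rightarrow> ('a set \<Rightarrow> bool) \<Rightarrow> nat \<Rightarrow> nat \<Rightarrow> bool" where
  "has_Ukk_U0l_minor E I k l \<longleftrightarrow>
     (\<exists>C D A L. C \<subseteq> E \<and> D \<subseteq> E \<and> C \<inter> D = {} \<and> A \<inter> L = {} \<and> A \<union> L = E - (C \<union> D)
        \<and> card A = k \<and> card L = l
        \<and> (\<forall>X. X \<subseteq> E - (C \<union> D) \<longrightarrow> (minor_indep I C D X \<longleftrightarrow> X \<subseteq> A)))"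

definition kl_uniform :: "'a set \<Rightarrow> ('a set \<Rightarrow> bool) \<Rightarrow> nat \<Rightarrow> nat \<Rightarrow> bool" where
  "kl_uniform E I k l \<longleftrightarrow> \<not> has_Ukk_U0l_minor E I k l"

definition lin_indep_over :: "('b, 'c) ring_scheme \<Rightarrow> nat \<Rightarrow> ('a \<Rightarrow> nat \<Rightarrow> 'b) \<Rightarrow> 'a set \<Rightarrow> bool" where
  "lin_indep_over R n phi X \<longleftrightarrow>
     (\<forall>c. c \<in> X \<rightarrow> carrier R \<longrightarrow>
        (\<forall>i<n. (\<Oplus>\<^bsub>R\<^esub> x\<in>X. c x \<otimes>\<^bsub>R\<^esub> phi x i) = \<zero>\<^bsub>R\<^esub>) \<longrightarrow> (\<forall>x\<in>X. c x = \<zero>\<^bsub>R\<^esub>))"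

definition representable_over :: "('b, 'c) ring_scheme \<Rightarrow> 'a set \<Rightarrow> ('a set \<Rightarrow> bool) \<Rightarrow> bool" where
  "representable_over R E I \<longleftrightarrow>
     (\<exists>n phi. (\<forall>x\<in>E. \<forall>i<n. phi x i \<in> carrier R) \<and> (\<forall>X. X \<subseteq> E \<longrightarrow> (I X \<longleftrightarrow> lin_indep_over R n phi X)))"

text \<open>GF(q)-representable: representable over some field with q elements (every finite field is
  isomorphic to one whose carrier is a set of naturals).\<close>
definition GF_representable :: "nat \<Rightarrow> 'a set \<Rightarrow> ('a set \<Rightarrow> bool) \<Rightarrow> bool" where
  "GF_representable q E I \<longleftrightarrow>
     (\<exists>R :: nat ring. field R \<and> finite (carrier R) \<and> card (carrier R) = q \<and> representable_over R E I)"

definition prime_power :: "nat \<Rightarrow> bool" where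
  "prime_power q \<longleftrightarrow> (\<exists>p m. prime p \<and> m \<ge> 1 \<and> q = p ^ m)"

text \<open>The matroids considered (on ground sets of naturals, which covers all matroids up to isomorphism).\<close>
definition good_matroid :: "nat \<Rightarrow> nat \<Rightarrow> nat \<Rightarrow> 'a set \<Rightarrow> ('a set \<Rightarrow> bool) \<Rightarrow> bool" where
  "good_matroid k l q E I \<longleftrightarrow> matroid E I \<and> simple_matroid E I \<and> cosimple_matroid E I
     \<and> GF_representable q E I \<and> kl_uniform E I k l"

definition fmax :: "nat \<Rightarrow> nat \<Rightarrow> nat \<Rightarrow> nat" where
  "fmax k l q = Sup {matroid_rank E I | (E :: nat set) I. good_matroid k l q E I}"

end

theory Submission imports Defs begin

text \<open>
  \<open>(k,l)\<close>-uniformity means that every independent set \<open>K\<close> with \<open>|K| + k \<le> r(M)\<close> spans fewer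
  than \<open>l\<close> elements outside \<open>K\<close>. If \<open>M\<close> is \<open>(k,l)\<close>-uniform but not \<open>(k-1,l+1)\<close>-uniform, a
  witness of the latter is an independent set \<open>C\<close> with \<open>r(M) = |C| + k - 1\<close> spanning a set \<open>L\<close>
  of \<open>l + 1\<close> further elements, and the restriction of \<open>M\<close> to \<open>C \<union> L\<close> is simple, cosimple and
  \<open>(1,l)\<close>-uniform of rank \<open>|C|\<close>. This gives the recursion, and by induction on \<open>k\<close> a bound
  for every \<open>k\<close>.

  For \<open>k = 1\<close> fix a basis \<open>B\<close> and write every other element in coordinates over \<open>B\<close>. For
  two basis elements \<open>c\<^sub>1, c\<^sub>2\<close>, the elements outside \<open>B\<close> with the same coordinates at
  \<open>c\<^sub>1, c\<^sub>2\<close> are either all spanned by \<open>B - {c\<^sub>1, c\<^sub>2}\<close> or parallel in the contraction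
  by it, so \<open>(1,l)\<close>-uniformity gives \<open>|E - B| \<le> q\<^sup>2 l\<close>. Cosimplicity forces the \<open>|B|\<close> rows
  of the coordinate matrix to be distinct, so \<open>|B| \<le> q\<^bsup>|E - B|\<^esup>\<close>.
\<close>

abbreviation restriction :: "('a set \<Rightarrow> bool) \<Rightarrow> 'a set \<Rightarrow> 'a set \<Rightarrow> bool" where
  "restriction I Z \<equiv> \<lambda>X. I X \<and> X \<subseteq> Z"

lemma card_le_mult_if_fibers_le:
  assumes "finite V" "f ` A \<subseteq> V" "\<And>v. v \<in> V \<Longrightarrow> card {x \<in> A. f x = v} \<le> m"
  shows "card A \<le> card V * m"
proof -
  have "A = (\<Union>v\<in>V. {x \<in> A. f x = v})" using assms(2) by blast
  then have "card A \<le> (\<Sum>v\<in>V. card {x \<in> A. f x = v})" by (metis card_UN_le assms(1))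
  also have "\<dots> \<le> card V * m" using sum_bounded_above[of V _ m] assms(3) by simp
  finally show ?thesis .
qed

lemma card_Diff_two:
  "finite B \<Longrightarrow> c1 \<in> B \<Longrightarrow> c2 \<in> B \<Longrightarrow> c1 \<noteq> c2 \<Longrightarrow> card (B - {c1, c2}) + 2 = card B"
  using card_mono[of B "{c1, c2}"] by (simp add: card_Diff_subset)

locale finite_matroid =
  fixes E :: "'a set" and I :: "'a set \<Rightarrow> bool"
  assumes matroid: "matroid E I"
begin

lemma finite_ground: "finite E"
  using matroid unfolding matroid_def by blast

lemma indep_subset_ground: "I X \<Longrightarrow> X \<subseteq> E"
  using matroid unfolding matroid_def by blast

lemma indep_subset: "I Y \<Longrightarrow> X \<subseteq> Y \<Longrightarrow> I X"
  using matroid unfolding matroid_def by blast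

lemma indep_empty: "I {}"
  using matroid unfolding matroid_def by blast

lemma indep_augment: "I X \<Longrightarrow> I Y \<Longrightarrow> card X < card Y \<Longrightarrow> \<exists>y\<in>Y - X. I (insert y X)"
  using matroid unfolding matroid_def by blast

lemma indep_finite: "I X \<Longrightarrow> finite X"
  using finite_ground indep_subset_ground finite_subset by blast

lemma indep_card_le_rank: "I X \<Longrightarrow> card X \<le> matroid_rank E I"
  unfolding matroid_rank_def using finite_ground indep_subset_ground by (intro Max_ge) auto

lemma exists_max_indep:
  obtains B where "I B" "card B = matroid_rank E I"
proof -
  have "matroid_rank E I \<in> card ` {X. X \<subseteq> E \<and> I X}"
    unfolding matroid_rank_def using finite_ground indep_empty by (intro Max_in) auto
  then show ?thesis using that by auto
qed

lemma rank_eqI: "I X \<Longrightarrow> (\<And>Y. I Y \<Longrightarrow> card Y \<le> card X) \<Longrightarrow> matroid_rank E I = card X"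
  by (metis exists_max_indep indep_card_le_rank le_antisym)

lemma indep_extend:
  assumes "I J" "card J + j \<le> matroid_rank E I"
  shows "\<exists>A. A \<inter> J = {} \<and> card A = j \<and> I (J \<union> A)"
  using assms(2)
proof (induction j)
  case 0
  show ?case using assms(1) by (intro exI[of _ "{}"]) auto
next
  case (Suc j)
  then obtain A where A: "A \<inter> J = {}" "card A = j" "I (J \<union> A)" by auto
  obtain B where B: "I B" "card B = matroid_rank E I" by (rule exists_max_indep)
  have fin: "finite A" "finite J" using A(3) indep_finite by auto
  then have "card (J \<union> A) < card B" using A Suc.prems B by (simp add: card_Un_disjoint Int_commute)
  then obtain y where "y \<in> B - (J \<union> A)" "I (insert y (J \<union> A))" using indep_augment A(3) B(1) by blast
  then show ?case using A fin by (intro exI[of _ "insert y A"]) auto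
qed

lemma matroid_restriction:
  assumes "Z \<subseteq> E"
  shows "matroid Z (restriction I Z)"
  unfolding matroid_def
proof (intro conjI allI impI)
  show "finite Z" using assms finite_ground finite_subset by blast
next
  fix X Y assume "restriction I Z X \<and> restriction I Z Y \<and> card X < card Y"
  then show "\<exists>y\<in>Y - X. restriction I Z (insert y X)"
    using indep_augment by blast
qed (use indep_empty indep_subset in auto)

lemma exists_basis_of:
  assumes "S \<subseteq> E"
  obtains K where "basis_of I S K"
proof -
  interpret S: finite_matroid S "restriction I S"
    using assms by unfold_locales (rule matroid_restriction)
  obtain K where K: "I K" "K \<subseteq> S" "card K = matroid_rank S (restriction I S)"
    by (rule S.exists_max_indep) auto
  have "\<not> I (insert x K)" if "x \<in> S - K" for x
    using S.indep_card_le_rank[of "insert x K"] K that indep_finite by auto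
  then show ?thesis using that K unfolding basis_of_def by blast
qed

lemma basis_of_card_ge:
  assumes "basis_of I S K" "I J" "J \<subseteq> S"
  shows "card J \<le> card K"
proof (rule ccontr)
  assume "\<not> ?thesis"
  then obtain y where "y \<in> J - K" "I (insert y K)"
    using indep_augment assms unfolding basis_of_def by (meson not_le)
  then show False using assms unfolding basis_of_def by blast
qed

lemma basis_of_ground_card:
  assumes "basis_of I E B"
  shows "card B = matroid_rank E I"
proof -
  obtain B0 where B0: "I B0" "card B0 = matroid_rank E I" by (rule exists_max_indep)
  have "card B0 \<le> card B" using basis_of_card_ge[OF assms B0(1) indep_subset_ground[OF B0(1)]] .
  moreover have "card B \<le> matroid_rank E I" using assms indep_card_le_rank unfolding basis_of_def by blast
  ultimately show ?thesis using B0(2) by simp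
qed

lemma basis_of_indep_iff: "I C \<Longrightarrow> basis_of I C B \<longleftrightarrow> B = C"
  unfolding basis_of_def using indep_subset by blast

lemma cosimple_basis_of_pair_complement_card:
  assumes "cosimple_matroid E I" "x \<in> E" "y \<in> E" "basis_of I (E - {x, y}) K"
  shows "card K = matroid_rank E I"
proof -
  have "dual_indep E I {x, y}"
    using assms(1-3) unfolding cosimple_matroid_def simple_matroid_def by blast
  then obtain B where B: "basis_of I E B" "{x, y} \<inter> B = {}" unfolding dual_indep_def by blast
  have "card B \<le> card K"
    using basis_of_card_ge[OF assms(4)] B unfolding basis_of_def by blast
  moreover have "card K \<le> matroid_rank E I"
    using assms(4) indep_card_le_rank unfolding basis_of_def by blast
  ultimately show ?thesis using basis_of_ground_card[OF B(1)] by simp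
qed

lemma cosimple_matroidI:
  assumes "\<And>x y. x \<in> E \<Longrightarrow> y \<in> E \<Longrightarrow> \<exists>K. K \<subseteq> E - {x, y} \<and> I K \<and> card K = matroid_rank E I"
  shows "cosimple_matroid E I"
  unfolding cosimple_matroid_def simple_matroid_def
proof (intro ballI)
  fix x y assume xy: "x \<in> E" "y \<in> E"
  obtain K where K: "K \<subseteq> E - {x, y}" "I K" "card K = matroid_rank E I"
    using assms[OF xy] by blast
  have "basis_of I E K"
    unfolding basis_of_def
  proof (intro conjI ballI notI)
    show "K \<subseteq> E" using K(1) by blast
    show "I K" by (fact K(2))
    fix z assume "z \<in> E - K" "I (insert z K)"
    then show False using indep_card_le_rank[of "insert z K"] K(3) indep_finite[OF K(2)] by simp
  qed
  then show "dual_indep E I {x, y}" unfolding dual_indep_def using K(1) xy by blast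
qed

lemma rank_restriction:
  assumes "Z \<subseteq> E" "basis_of I Z C"
  shows "matroid_rank Z (restriction I Z) = card C"
proof -
  interpret Z: finite_matroid Z "restriction I Z"
    using assms(1) by unfold_locales (rule matroid_restriction)
  show ?thesis
    using assms(2) basis_of_card_ge[OF assms(2)] unfolding basis_of_def by (intro Z.rank_eqI) auto
qed

section \<open>Uniformity via spanned sets\<close>

text \<open>The minor \<open>M / C\<close> restricted to \<open>A \<union> L\<close> is \<open>U\<^sub>k\<^sub>,\<^sub>k \<oplus> U\<^sub>0\<^sub>,\<^sub>l\<close>.\<close>
definition minor_witness :: "nat \<Rightarrow> nat \<Rightarrow> 'a set \<Rightarrow> 'a set \<Rightarrow> 'a set \<Rightarrow> bool" where
  "minor_witness k l C A L \<longleftrightarrow> I (C \<union> A) \<and> C \<inter> A = {} \<and> card A = k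
     \<and> L \<subseteq> E - (C \<union> A) \<and> card L = l \<and> (\<forall>e\<in>L. \<not> I (insert e C))"

lemma witness_if_has_Ukk_U0l_minor:
  assumes "has_Ukk_U0l_minor E I k l"
  shows "\<exists>C A L. minor_witness k l C A L"
proof -
  obtain C D A L where h: "C \<subseteq> E" "D \<subseteq> E" "C \<inter> D = {}" "A \<inter> L = {}"
    "A \<union> L = E - (C \<union> D)" "card A = k" "card L = l"
    "\<And>X. X \<subseteq> E - (C \<union> D) \<Longrightarrow> minor_indep I C D X \<longleftrightarrow> X \<subseteq> A"
    using assms unfolding has_Ukk_U0l_minor_def by blast
  have "minor_indep I C D A" using h(5,8) by blast
  then obtain B where B: "basis_of I C B" "I (A \<union> B)" unfolding minor_indep_def by auto
  have "\<not> I (insert e B)" if e: "e \<in> L" for e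
  proof
    assume "I (insert e B)"
    have e_out: "{e} \<subseteq> E - (C \<union> D)" using e h(5) by blast
    then have "minor_indep I C D {e}" using B(1) \<open>I (insert e B)\<close> unfolding minor_indep_def by auto
    then have "e \<in> A" using h(8)[OF e_out] by blast
    then show False using e h(4) by blast
  qed
  moreover have "B \<subseteq> C" using B(1) unfolding basis_of_def by blast
  ultimately have "minor_witness k l B A L"
    unfolding minor_witness_def using B(2) h(4-7) by (auto simp: Un_commute)
  then show ?thesis by blast
qed

lemma has_Ukk_U0l_minor_if_witness:
  assumes "minor_witness k l C A L"
  shows "has_Ukk_U0l_minor E I k l"
proof -
  have w: "I (C \<union> A)" "C \<inter> A = {}" "card A = k" "L \<subseteq> E - (C \<union> A)" "card L = l"
    "\<forall>e\<in>L. \<not> I (insert e C)"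
    using assms unfolding minor_witness_def by auto
  have IC: "I C" using w(1) indep_subset by blast
  have CAE: "C \<union> A \<subseteq> E" using w(1) indep_subset_ground by blast
  define D where "D = E - (C \<union> A \<union> L)"
  have "minor_indep I C D X \<longleftrightarrow> X \<subseteq> A" if X: "X \<subseteq> E - (C \<union> D)" for X
  proof -
    have "minor_indep I C D X \<longleftrightarrow> I (X \<union> C)"
      unfolding minor_indep_def basis_of_indep_iff[OF IC] using X by auto
    also have "\<dots> \<longleftrightarrow> X \<subseteq> A"
    proof
      assume "I (X \<union> C)"
      then have "I (insert e C)" if "e \<in> X" for e using indep_subset that by blast
      then show "X \<subseteq> A" using w(6) X unfolding D_def by blast
    next
      assume "X \<subseteq> A"
      then show "I (X \<union> C)" using w(1) indep_subset by blast
    qed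
    finally show ?thesis .
  qed
  moreover have "A \<union> L = E - (C \<union> D)" "A \<inter> L = {}" "C \<subseteq> E" "D \<subseteq> E" "C \<inter> D = {}"
    using w(2,4) CAE unfolding D_def by blast+
  ultimately show ?thesis
    unfolding has_Ukk_U0l_minor_def using w(3,5) by blast
qed

lemma has_Ukk_U0l_minor_iff_witness:
  "has_Ukk_U0l_minor E I k l \<longleftrightarrow> (\<exists>C A L. minor_witness k l C A L)"
  using witness_if_has_Ukk_U0l_minor has_Ukk_U0l_minor_if_witness by blast

lemma kl_uniform_card_spanned_less:
  assumes "kl_uniform E I k l" "I K" "card K + k \<le> matroid_rank E I" "L \<subseteq> E - K"
    "\<forall>x\<in>L. \<not> I (insert x K)"
  shows "card L < l"
proof (rule ccontr)
  assume "\<not> card L < l"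
  moreover have "finite L" using assms(4) finite_ground finite_subset by blast
  ultimately obtain L' where L': "L' \<subseteq> L" "card L' = l"
    by (metis not_less obtain_subset_with_card_n)
  obtain A where A: "A \<inter> K = {}" "card A = k" "I (K \<union> A)"
    using indep_extend assms(2,3) by blast
  have "I (insert a K)" if "a \<in> A" for a
    using A(3) indep_subset that by blast
  then have "A \<inter> L' = {}" using assms(5) L'(1) by blast
  then have "minor_witness k l K A L'" unfolding minor_witness_def using A L' assms(4,5) by auto
  then show False using assms(1) has_Ukk_U0l_minor_if_witness unfolding kl_uniform_def by blast
qed

lemma basis_of_spanned:
  "I C \<Longrightarrow> \<forall>e\<in>L. \<not> I (insert e C) \<Longrightarrow> basis_of I (C \<union> L) C"
  unfolding basis_of_def by blast

lemma kl_uniform_1l_restriction_spanned: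
  assumes U: "kl_uniform E I k l" and C: "I C" "card C + (k - 1) \<le> matroid_rank E I"
    and L: "L \<subseteq> E - C" "\<forall>e\<in>L. \<not> I (insert e C)"
  shows "kl_uniform (C \<union> L) (restriction I (C \<union> L)) 1 l"
proof -
  let ?Z = "C \<union> L"
  have ZE: "?Z \<subseteq> E" using C(1) indep_subset_ground L(1) by blast
  interpret Z: finite_matroid ?Z "restriction I ?Z"
    using ZE by unfold_locales (rule matroid_restriction)
  have rank_Z: "matroid_rank ?Z (restriction I ?Z) = card C"
    using rank_restriction[OF ZE basis_of_spanned[OF C(1) L(2)]] .
  show ?thesis
    unfolding kl_uniform_def Z.has_Ukk_U0l_minor_iff_witness
  proof
    assume "\<exists>C' A' L'. Z.minor_witness 1 l C' A' L'"
    then obtain C' A' L' where w: "I (C' \<union> A')" "C' \<union> A' \<subseteq> ?Z" "C' \<inter> A' = {}" "card A' = 1"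
      "L' \<subseteq> ?Z - (C' \<union> A')" "card L' = l" "\<forall>e\<in>L'. \<not> restriction I ?Z (insert e C')"
      unfolding Z.minor_witness_def by blast
    then have spanned: "\<forall>e\<in>L'. \<not> I (insert e C')" by blast
    have IC': "I C'" using w(1) indep_subset by blast
    have "card (C' \<union> A') \<le> card C" using Z.indep_card_le_rank[of "C' \<union> A'"] w(1,2) rank_Z by simp
    then have "card C' + 1 \<le> card C"
      using w(3,4) indep_finite[OF IC'] by (simp add: card_Un_disjoint card_ge_0_finite)
    then have "card C' + k \<le> matroid_rank E I" using C(2) by simp
    then have "card L' < l" using kl_uniform_card_spanned_less[OF U IC' _ _ spanned] w(5) ZE by blast
    then show False using w(6) by simp
  qed
qed

lemma cosimple_restriction_spanned:
  assumes U: "kl_uniform E I k l" and C: "I C" "card C + (k - 1) \<le> matroid_rank E I"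
    and L: "L \<subseteq> E - C" "\<forall>e\<in>L. \<not> I (insert e C)" "l + 1 \<le> card L"
  shows "cosimple_matroid (C \<union> L) (restriction I (C \<union> L))"
proof -
  let ?Z = "C \<union> L"
  have ZE: "?Z \<subseteq> E" using C(1) indep_subset_ground L(1) by blast
  interpret Z: finite_matroid ?Z "restriction I ?Z"
    using ZE by unfold_locales (rule matroid_restriction)
  have rank_Z: "matroid_rank ?Z (restriction I ?Z) = card C"
    using rank_restriction[OF ZE basis_of_spanned[OF C(1) L(2)]] .
  have "C \<inter> L = {}" using L(1) by blast
  then have card_Z: "card ?Z = card C + card L"
    using indep_finite[OF C(1)] finite_subset[OF ZE finite_ground] by (simp add: card_Un_disjoint)
  show ?thesis
  proof (rule Z.cosimple_matroidI)
    fix x y assume "x \<in> ?Z" "y \<in> ?Z"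
    let ?S = "?Z - {x, y}"
    have "?S \<subseteq> E" using ZE by blast
    then obtain K where K: "basis_of I ?S K" by (rule exists_basis_of)
    then have KS: "K \<subseteq> ?S" "I K" "\<forall>z\<in>?S - K. \<not> I (insert z K)"
      unfolding basis_of_def by auto
    have "card {x, y} \<le> 2" by (cases "x = y") auto
    then have card_S: "card ?Z - 2 \<le> card ?S" using diff_card_le_card_Diff[of "{x, y}" ?Z] by simp
    have "card C \<le> card K"
    proof (rule ccontr)
      assume small: "\<not> ?thesis"
      then have "card K + k \<le> matroid_rank E I" using C(2) by simp
      moreover have "?S - K \<subseteq> E - K" using ZE by blast
      ultimately have "card (?S - K) < l"
        using kl_uniform_card_spanned_less[OF U KS(2) _ _ KS(3)] by blast
      moreover have "card ?S - card K \<le> card (?S - K)"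
        using diff_card_le_card_Diff[OF indep_finite[OF KS(2)]] .
      ultimately show False using card_S card_Z L(3) small by linarith
    qed
    moreover have "card K \<le> card C" using Z.indep_card_le_rank[of K] KS rank_Z by auto
    ultimately show "\<exists>K. K \<subseteq> ?Z - {x, y} \<and> restriction I ?Z K \<and> card K = matroid_rank ?Z (restriction I ?Z)"
      using KS rank_Z by (intro exI[of _ K]) auto
  qed
qed

lemma reduction_to_1l_uniform:
  assumes U: "kl_uniform E I k l" and k: "k \<ge> 1" and nU: "\<not> kl_uniform E I (k - 1) (l + 1)"
  obtains Z where "Z \<subseteq> E" "cosimple_matroid Z (restriction I Z)" "kl_uniform Z (restriction I Z) 1 l"
    "matroid_rank E I \<le> matroid_rank Z (restriction I Z) + (k - 1)"
proof -
  obtain C A L where w: "I (C \<union> A)" "C \<inter> A = {}" "card A = k - 1" "L \<subseteq> E - (C \<union> A)"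
    "card L = l + 1" "\<forall>e\<in>L. \<not> I (insert e C)"
    using nU unfolding kl_uniform_def has_Ukk_U0l_minor_iff_witness minor_witness_def by blast
  have IC: "I C" using w(1) indep_subset by blast
  have L: "L \<subseteq> E - C" using w(4) by blast
  have "finite C" "finite A" using indep_finite[OF w(1)] by auto
  then have "card (C \<union> A) = card C + (k - 1)" using w(2,3) by (simp add: card_Un_disjoint)
  then have rank_ge: "card C + (k - 1) \<le> matroid_rank E I"
    using indep_card_le_rank[OF w(1)] by simp
  have rank_le: "matroid_rank E I \<le> card C + (k - 1)"
  proof (rule ccontr)
    assume "\<not> ?thesis"
    then have "card C + k \<le> matroid_rank E I" using k by simp
    then have "card L < l" using kl_uniform_card_spanned_less[OF U IC _ L w(6)] by blast
    then show False using w(5) by simp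
  qed
  have ZE: "C \<union> L \<subseteq> E" using IC indep_subset_ground L by blast
  show ?thesis
  proof (rule that[OF ZE])
    show "cosimple_matroid (C \<union> L) (restriction I (C \<union> L))"
      using cosimple_restriction_spanned[OF U IC rank_ge L w(6)] w(5) by simp
    show "kl_uniform (C \<union> L) (restriction I (C \<union> L)) 1 l"
      by (rule kl_uniform_1l_restriction_spanned[OF U IC rank_ge L w(6)])
    show "matroid_rank E I \<le> matroid_rank (C \<union> L) (restriction I (C \<union> L)) + (k - 1)"
      using rank_le rank_restriction[OF ZE basis_of_spanned[OF IC w(6)]] by simp
  qed
qed

end

section \<open>Coordinates over a representing field\<close>

locale represented_matroid = finite_matroid E I + field R
  for E :: "'a set" and I and R :: "('b, 'c) ring_scheme" (structure) +
  fixes n :: nat and phi :: "'a \<Rightarrow> nat \<Rightarrow> 'b"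
  assumes vec_closed: "x \<in> E \<Longrightarrow> i < n \<Longrightarrow> phi x i \<in> carrier R"
    and indep_iff_lin_indep: "X \<subseteq> E \<Longrightarrow> I X \<longleftrightarrow> lin_indep_over R n phi X"
begin

definition lin_comb :: "('a \<Rightarrow> 'b) \<Rightarrow> 'a set \<Rightarrow> nat \<Rightarrow> 'b" where
  "lin_comb c X i = (\<Oplus>x\<in>X. c x \<otimes> phi x i)"

definition in_span :: "'a set \<Rightarrow> 'a \<Rightarrow> bool" where
  "in_span T x \<longleftrightarrow> (\<exists>a\<in>T \<rightarrow> carrier R. \<forall>i<n. phi x i = lin_comb a T i)"

lemma lin_comb_terms_closed:
  "c \<in> X \<rightarrow> carrier R \<Longrightarrow> X \<subseteq> E \<Longrightarrow> i < n \<Longrightarrow> (\<lambda>x. c x \<otimes> phi x i) \<in> X \<rightarrow> carrier R"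
  using vec_closed by (auto simp: Pi_iff)

lemma lin_comb_closed:
  "c \<in> X \<rightarrow> carrier R \<Longrightarrow> X \<subseteq> E \<Longrightarrow> i < n \<Longrightarrow> lin_comb c X i \<in> carrier R"
  unfolding lin_comb_def by (intro finsum_closed lin_comb_terms_closed)

lemma lin_comb_cong:
  assumes "X \<subseteq> E" "i < n" "d \<in> X \<rightarrow> carrier R" "\<And>x. x \<in> X \<Longrightarrow> c x = d x"
  shows "lin_comb c X i = lin_comb d X i"
  unfolding lin_comb_def using lin_comb_terms_closed[OF assms(3,1,2)] assms(4)
  by (intro finsum_cong') auto

lemma lin_comb_insert:
  assumes "finite X" "x \<notin> X" "insert x X \<subseteq> E" "c \<in> insert x X \<rightarrow> carrier R" "i < n"
  shows "lin_comb c (insert x X) i = c x \<otimes> phi x i \<oplus> lin_comb c X i"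
  unfolding lin_comb_def using assms lin_comb_terms_closed[OF assms(4,3,5)] by (intro finsum_insert) auto

lemma lin_comb_mono_neutral:
  assumes "finite X" "Y \<subseteq> X" "X \<subseteq> E" "c \<in> X \<rightarrow> carrier R" "\<forall>z\<in>X - Y. c z = \<zero>" "i < n"
  shows "lin_comb c X i = lin_comb c Y i"
  unfolding lin_comb_def using assms lin_comb_terms_closed[OF assms(4,3,6)] vec_closed
  by (intro add.finprod_mono_neutral_cong_right) auto

lemma lin_comb_smult:
  assumes "finite X" "X \<subseteq> E" "c \<in> X \<rightarrow> carrier R" "\<alpha> \<in> carrier R" "i < n"
  shows "lin_comb (\<lambda>x. \<alpha> \<otimes> c x) X i = \<alpha> \<otimes> lin_comb c X i"
proof -
  have "lin_comb (\<lambda>x. \<alpha> \<otimes> c x) X i = (\<Oplus>x\<in>X. \<alpha> \<otimes> (c x \<otimes> phi x i))"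
    unfolding lin_comb_def using assms vec_closed by (intro finsum_cong') (auto simp: m_assoc Pi_iff)
  also have "\<dots> = \<alpha> \<otimes> lin_comb c X i"
    unfolding lin_comb_def using assms lin_comb_terms_closed by (intro finsum_rdistr[symmetric]) auto
  finally show ?thesis .
qed

lemma lin_comb_add_smult:
  assumes "finite X" "X \<subseteq> E" "a \<in> X \<rightarrow> carrier R" "b \<in> X \<rightarrow> carrier R" "\<beta> \<in> carrier R" "i < n"
  shows "lin_comb (\<lambda>x. a x \<oplus> \<beta> \<otimes> b x) X i = lin_comb a X i \<oplus> \<beta> \<otimes> lin_comb b X i"
proof -
  have "lin_comb (\<lambda>x. a x \<oplus> \<beta> \<otimes> b x) X i = (\<Oplus>x\<in>X. a x \<otimes> phi x i \<oplus> (\<beta> \<otimes> b x) \<otimes> phi x i)"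
    unfolding lin_comb_def using assms vec_closed by (intro finsum_cong') (auto simp: l_distr Pi_iff)
  also have "\<dots> = lin_comb a X i \<oplus> lin_comb (\<lambda>x. \<beta> \<otimes> b x) X i"
  proof -
    have "(\<lambda>x. \<beta> \<otimes> b x) \<in> X \<rightarrow> carrier R" using assms(4,5) by auto
    then show ?thesis unfolding lin_comb_def
      using lin_comb_terms_closed assms(2,3,6) by (intro finsum_addf) auto
  qed
  finally show ?thesis using lin_comb_smult assms by simp
qed

lemma indep_lin_comb_zero:
  assumes "I X" "c \<in> X \<rightarrow> carrier R" "\<forall>i<n. lin_comb c X i = \<zero>" "x \<in> X"
  shows "c x = \<zero>"
proof -
  have "lin_indep_over R n phi X" using assms(1) indep_iff_lin_indep indep_subset_ground by blast
  then show ?thesis using assms(2-4) unfolding lin_indep_over_def lin_comb_def by blast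
qed

lemma dependent_if_in_span:
  assumes "finite T" "T \<subseteq> E" "x \<in> E - T" "in_span T x"
  shows "\<not> I (insert x T)"
proof
  obtain a where a: "a \<in> T \<rightarrow> carrier R" "\<forall>i<n. phi x i = lin_comb a T i"
    using assms(4) unfolding in_span_def by blast
  define c where "c z = (if z = x then \<ominus> \<one> else a z)" for z
  have xT: "x \<notin> T" "insert x T \<subseteq> E" using assms(2,3) by auto
  have c: "c \<in> insert x T \<rightarrow> carrier R" using a(1) xT unfolding c_def by auto
  have "lin_comb c (insert x T) i = \<zero>" if i: "i < n" for i
  proof -
    have "lin_comb c T i = lin_comb a T i"
      using xT(1) unfolding c_def by (intro lin_comb_cong[OF assms(2) i a(1)]) auto
    moreover have "c x = \<ominus> \<one>" unfolding c_def by simp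
    ultimately have "lin_comb c (insert x T) i = \<ominus> \<one> \<otimes> phi x i \<oplus> phi x i"
      using lin_comb_insert[OF assms(1) xT c i] a(2) i by simp
    also have "\<dots> = \<zero>" using vec_closed assms(3) i by (simp add: l_minus l_neg)
    finally show ?thesis .
  qed
  moreover assume "I (insert x T)"
  ultimately have "c x = \<zero>" using indep_lin_comb_zero c by blast
  then show False unfolding c_def by simp
qed

lemma in_span_if_dependent:
  assumes "I T" "x \<in> E - T" "\<not> I (insert x T)"
  shows "in_span T x"
proof -
  have T: "finite T" "T \<subseteq> E" using assms(1) indep_finite indep_subset_ground by auto
  have xT: "x \<notin> T" "insert x T \<subseteq> E" using T(2) assms(2) by auto
  obtain c where c: "c \<in> insert x T \<rightarrow> carrier R" "\<forall>i<n. lin_comb c (insert x T) i = \<zero>"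
    "\<exists>y\<in>insert x T. c y \<noteq> \<zero>"
    using assms(3) indep_iff_lin_indep[OF xT(2)] unfolding lin_indep_over_def lin_comb_def by blast
  have cT: "c \<in> T \<rightarrow> carrier R" and cx: "c x \<in> carrier R" using c(1) by auto
  have sum: "c x \<otimes> phi x i \<oplus> lin_comb c T i = \<zero>" if "i < n" for i
    using c(2) lin_comb_insert[OF T(1) xT c(1) that] that by simp
  have "c x \<noteq> \<zero>"
  proof
    assume "c x = \<zero>"
    then have "\<forall>i<n. lin_comb c T i = \<zero>"
      using sum lin_comb_closed[OF cT T(2)] vec_closed assms(2) by auto
    then have "\<forall>y\<in>T. c y = \<zero>" using indep_lin_comb_zero[OF assms(1) cT] by blast
    then show False using c(3) \<open>c x = \<zero>\<close> by blast
  qed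
  then have U: "c x \<in> Units R" using cx field_Units by blast
  define \<alpha> where "\<alpha> = \<ominus> (inv (c x))"
  have \<alpha>: "\<alpha> \<in> carrier R" unfolding \<alpha>_def using U by simp
  show ?thesis
    unfolding in_span_def
  proof (intro bexI[of _ "\<lambda>s. \<alpha> \<otimes> c s"] allI impI)
    show "(\<lambda>s. \<alpha> \<otimes> c s) \<in> T \<rightarrow> carrier R" using cT \<alpha> by auto
    fix i assume i: "i < n"
    have px: "phi x i \<in> carrier R" using vec_closed assms(2) i by blast
    have "lin_comb c T i = \<ominus> (c x \<otimes> phi x i)"
      using sum[OF i] lin_comb_closed[OF cT T(2) i] cx px by (intro minus_equality[symmetric]) (auto simp: a_comm)
    then have "lin_comb (\<lambda>s. \<alpha> \<otimes> c s) T i = \<alpha> \<otimes> \<ominus> (c x \<otimes> phi x i)"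
      using lin_comb_smult[OF T cT \<alpha> i] by simp
    also have "\<dots> = phi x i"
      using U cx px unfolding \<alpha>_def by (simp add: m_assoc[symmetric] l_minus r_minus)
    finally have "lin_comb (\<lambda>s. \<alpha> \<otimes> c s) T i = phi x i" .
    then show "phi x i = lin_comb (\<lambda>s. \<alpha> \<otimes> c s) T i" ..
  qed
qed

end

locale coordinatized_matroid = represented_matroid +
  fixes B :: "'a set"
  assumes basis_indep: "I B" and basis_card: "card B = matroid_rank E I"
begin

definition coord :: "'a \<Rightarrow> 'a \<Rightarrow> 'b" where
  "coord x = (SOME a. a \<in> B \<rightarrow> carrier R \<and> (\<forall>i<n. phi x i = lin_comb a B i))"

lemma basis_finite: "finite B"
  using basis_indep indep_finite by blast

lemma basis_subset: "B \<subseteq> E"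
  using basis_indep indep_subset_ground by blast

lemma coord_spec:
  assumes "x \<in> E - B"
  shows "coord x \<in> B \<rightarrow> carrier R" "\<forall>i<n. phi x i = lin_comb (coord x) B i"
proof -
  have "\<not> I (insert x B)"
    using indep_card_le_rank[of "insert x B"] basis_card assms basis_finite by auto
  then have "in_span B x" using in_span_if_dependent basis_indep assms by blast
  then have "\<exists>a. a \<in> B \<rightarrow> carrier R \<and> (\<forall>i<n. phi x i = lin_comb a B i)"
    unfolding in_span_def by blast
  from someI_ex[OF this] show "coord x \<in> B \<rightarrow> carrier R" "\<forall>i<n. phi x i = lin_comb (coord x) B i"
    unfolding coord_def by auto
qed

lemma coord_closed: "x \<in> E - B \<Longrightarrow> z \<in> B \<Longrightarrow> coord x z \<in> carrier R"
  using coord_spec(1) by blast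

lemma coord_unique:
  assumes "x \<in> E - B" "a \<in> B \<rightarrow> carrier R" "\<forall>i<n. phi x i = lin_comb a B i" "z \<in> B"
  shows "a z = coord x z"
proof -
  define d where "d w = a w \<oplus> \<ominus> \<one> \<otimes> coord x w" for w
  have d: "d \<in> B \<rightarrow> carrier R" using assms(2) coord_closed[OF assms(1)] unfolding d_def by auto
  have "lin_comb d B i = \<zero>" if i: "i < n" for i
  proof -
    have "lin_comb d B i = phi x i \<oplus> \<ominus> \<one> \<otimes> phi x i"
      unfolding d_def using lin_comb_add_smult[OF basis_finite basis_subset assms(2) coord_spec(1)[OF assms(1)] _ i]
        assms(3) coord_spec(2)[OF assms(1)] i by simp
    also have "\<dots> = \<zero>" using vec_closed assms(1) i by (simp add: l_minus r_neg)
    finally show ?thesis .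
  qed
  then have "d z = \<zero>" using indep_lin_comb_zero[OF basis_indep d] assms(4) by blast
  moreover have "a z = d z \<oplus> coord x z"
  proof -
    have "a z \<in> carrier R" "coord x z \<in> carrier R" using assms(2,4) coord_closed[OF assms(1,4)] by auto
    then show ?thesis unfolding d_def by algebra
  qed
  ultimately show ?thesis using coord_closed[OF assms(1,4)] by simp
qed

lemma indep_insert_iff_coord:
  assumes "T \<subseteq> B" "x \<in> E - B"
  shows "I (insert x T) \<longleftrightarrow> (\<exists>z\<in>B - T. coord x z \<noteq> \<zero>)"
proof
  have T: "finite T" "T \<subseteq> E" using assms(1) basis_finite basis_subset finite_subset by auto
  assume indep: "I (insert x T)"
  show "\<exists>z\<in>B - T. coord x z \<noteq> \<zero>"
  proof (rule ccontr)
    assume "\<not> ?thesis"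
    then have "lin_comb (coord x) B i = lin_comb (coord x) T i" if "i < n" for i
      using lin_comb_mono_neutral[OF basis_finite assms(1) basis_subset coord_spec(1)[OF assms(2)] _ that] by blast
    then have "in_span T x"
      unfolding in_span_def using coord_spec[OF assms(2)] assms(1) by (intro bexI[of _ "coord x"]) auto
    then show False using dependent_if_in_span[OF T] assms indep by blast
  qed
next
  assume "\<exists>z\<in>B - T. coord x z \<noteq> \<zero>"
  then obtain z where z: "z \<in> B - T" "coord x z \<noteq> \<zero>" by blast
  show "I (insert x T)"
  proof (rule ccontr)
    assume "\<not> I (insert x T)"
    moreover have "I T" using basis_indep assms(1) indep_subset by blast
    ultimately obtain a where a: "a \<in> T \<rightarrow> carrier R" "\<forall>i<n. phi x i = lin_comb a T i"
      using in_span_if_dependent assms unfolding in_span_def by blast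
    define a' where "a' w = (if w \<in> T then a w else \<zero>)" for w
    have a': "a' \<in> B \<rightarrow> carrier R" using a(1) unfolding a'_def by auto
    have "phi x i = lin_comb a' B i" if i: "i < n" for i
    proof -
      have "lin_comb a' B i = lin_comb a' T i"
        using lin_comb_mono_neutral[OF basis_finite assms(1) basis_subset a' _ i] unfolding a'_def by auto
      also have "\<dots> = lin_comb a T i"
        using assms(1) basis_subset a(1) i unfolding a'_def by (intro lin_comb_cong) auto
      finally show ?thesis using a(2) i by simp
    qed
    then have "a' z = coord x z" using coord_unique[OF assms(2) a'] z(1) by blast
    then show False using z unfolding a'_def by simp
  qed
qed

lemma dependent_if_coord_proportional:
  assumes "T \<subseteq> B" "x \<in> E - B" "y \<in> E - B" "x \<noteq> y" "\<beta> \<in> carrier R"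
    and proportional: "\<forall>z\<in>B - T. coord x z = \<beta> \<otimes> coord y z"
  shows "\<not> I (insert x (insert y T))"
proof -
  define a where "a z = (if z = y then \<beta> else coord x z \<oplus> \<ominus> \<beta> \<otimes> coord y z)" for z
  have yT: "y \<notin> T" "insert y T \<subseteq> E" "finite T" "T \<subseteq> E"
    using assms(1,3) basis_subset basis_finite finite_subset by auto
  have a_B: "(\<lambda>z. coord x z \<oplus> \<ominus> \<beta> \<otimes> coord y z) \<in> B \<rightarrow> carrier R"
    using coord_closed assms(2,3,5) by auto
  have a: "a \<in> insert y T \<rightarrow> carrier R" using a_B assms(1,5) unfolding a_def by auto
  have "phi x i = lin_comb a (insert y T) i" if i: "i < n" for i
  proof -
    have px: "phi x i \<in> carrier R" "phi y i \<in> carrier R" using vec_closed assms(2,3) i by auto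
    have "lin_comb a T i = lin_comb (\<lambda>z. coord x z \<oplus> \<ominus> \<beta> \<otimes> coord y z) T i"
      using yT(1,4) i a_B assms(1) unfolding a_def by (intro lin_comb_cong) auto
    also have "\<dots> = lin_comb (\<lambda>z. coord x z \<oplus> \<ominus> \<beta> \<otimes> coord y z) B i"
    proof (rule lin_comb_mono_neutral[OF basis_finite assms(1) basis_subset a_B _ i, symmetric], rule ballI)
      fix z assume z: "z \<in> B - T"
      then have "coord y z \<in> carrier R" using coord_closed assms(3) by blast
      then show "coord x z \<oplus> \<ominus> \<beta> \<otimes> coord y z = \<zero>"
        using proportional z assms(5) by (simp add: l_minus r_neg)
    qed
    also have "\<dots> = phi x i \<oplus> \<ominus> \<beta> \<otimes> phi y i"
      using lin_comb_add_smult[OF basis_finite basis_subset coord_spec(1)[OF assms(2)] coord_spec(1)[OF assms(3)] _ i]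
        coord_spec(2)[OF assms(2)] coord_spec(2)[OF assms(3)] assms(5) i by simp
    finally have "lin_comb a (insert y T) i = \<beta> \<otimes> phi y i \<oplus> (phi x i \<oplus> \<ominus> \<beta> \<otimes> phi y i)"
      using lin_comb_insert[OF yT(3,1,2) a i] unfolding a_def by simp
    also have "\<dots> = phi x i" using px assms(5) by algebra
    finally show ?thesis by simp
  qed
  then have "in_span (insert y T) x" unfolding in_span_def using a by blast
  then show ?thesis using dependent_if_in_span[of "insert y T" x] yT assms(1,2,4) by auto
qed

lemma card_spanned_lt:
  assumes U: "kl_uniform E I 1 l" and T: "T \<subseteq> B" "card T + 2 = card B"
  shows "card {x \<in> E - B. \<not> I (insert x T)} < l"
proof (rule kl_uniform_card_spanned_less[OF U])
  show "I T" using basis_indep T(1) indep_subset by blast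
  show "card T + 1 \<le> matroid_rank E I" using T(2) basis_card by simp
qed (use T(1) in auto)

lemma card_parallel_class_le:
  assumes U: "kl_uniform E I 1 l" and T: "T \<subseteq> B" "card T + 2 = card B"
    and y: "y \<in> E - B" "I (insert y T)"
  shows "card {x \<in> E - B. \<forall>z\<in>B - T. coord x z = coord y z} \<le> l"
proof -
  let ?P = "{x \<in> E - B. \<forall>z\<in>B - T. coord x z = coord y z}"
  have "card (?P - {y}) < l"
  proof (rule kl_uniform_card_spanned_less[OF U y(2)])
    have "y \<notin> T" "finite T" using T(1) y(1) basis_finite finite_subset by auto
    then show "card (insert y T) + 1 \<le> matroid_rank E I" using T(2) basis_card by simp
    show "?P - {y} \<subseteq> E - insert y T" using T(1) by blast
    show "\<forall>x\<in>?P - {y}. \<not> I (insert x (insert y T))"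
    proof
      fix x assume x: "x \<in> ?P - {y}"
      then have "\<forall>z\<in>B - T. coord x z = \<one> \<otimes> coord y z" using coord_closed[OF y(1)] by auto
      then show "\<not> I (insert x (insert y T))"
        using dependent_if_coord_proportional[OF T(1) _ y(1) _ one_closed] x by blast
    qed
  qed
  moreover have "finite ?P" using finite_ground by auto
  ultimately show ?thesis by (simp add: card_Diff_singleton_if split: if_splits)
qed

lemma card_coord_fiber_le:
  assumes U: "kl_uniform E I 1 l" and c: "c1 \<in> B" "c2 \<in> B" "c1 \<noteq> c2"
  shows "card {x \<in> E - B. (coord x c1, coord x c2) = v} \<le> l"
proof -
  define T where "T = B - {c1, c2}"
  let ?F = "{x \<in> E - B. (coord x c1, coord x c2) = v}"
  have T: "T \<subseteq> B" "B - T = {c1, c2}" "card T + 2 = card B"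
    using c card_Diff_two[OF basis_finite c] unfolding T_def by auto
  have indep_iff: "I (insert x T) \<longleftrightarrow> (coord x c1, coord x c2) \<noteq> (\<zero>, \<zero>)" if "x \<in> E - B" for x
    using indep_insert_iff_coord[OF T(1) that] T(2) by auto
  have fin: "finite {x \<in> E - B. P x}" for P using finite_ground by auto
  consider "v = (\<zero>, \<zero>)" | "?F = {}" | y where "y \<in> ?F" "v \<noteq> (\<zero>, \<zero>)" by blast
  then show ?thesis
  proof cases
    case 1
    then have "card ?F \<le> card {x \<in> E - B. \<not> I (insert x T)}"
      using indep_iff by (intro card_mono[OF fin]) auto
    then show ?thesis using card_spanned_lt[OF U T(1,3)] by simp
  next
    case 2
    then show ?thesis by (metis card.empty zero_le)
  next
    case (3 y)
    then have "I (insert y T)" using indep_iff by auto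
    moreover have "card ?F \<le> card {x \<in> E - B. \<forall>z\<in>B - T. coord x z = coord y z}"
      using 3 T(2) by (intro card_mono[OF fin]) auto
    ultimately show ?thesis using card_parallel_class_le[OF U T(1,3)] 3(1) by fastforce
  qed
qed

lemma card_nonbasis_le:
  assumes U: "kl_uniform E I 1 l" and two: "2 \<le> card B" and fin: "finite (carrier R)"
  shows "card (E - B) \<le> card (carrier R) ^ 2 * l"
proof -
  obtain c1 c2 where c: "c1 \<in> B" "c2 \<in> B" "c1 \<noteq> c2"
    using two card_le_Suc0_iff_eq[OF basis_finite] by (metis not_less_eq_eq numeral_2_eq_2)
  have "card (E - B) \<le> card (carrier R \<times> carrier R) * l"
    using fin coord_closed c card_coord_fiber_le[OF U c]
    by (intro card_le_mult_if_fibers_le[where f = "\<lambda>x. (coord x c1, coord x c2)"]) auto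
  then show ?thesis by (simp add: card_cartesian_product power2_eq_square)
qed

lemma coord_row_nonzero:
  assumes cos: "cosimple_matroid E I" and b: "b \<in> B"
  shows "\<exists>x\<in>E - B. coord x b \<noteq> \<zero>"
proof (rule ccontr)
  assume zero: "\<not> ?thesis"
  let ?K = "B - {b}"
  have "basis_of I (E - {b, b}) ?K"
    unfolding basis_of_def
  proof (intro conjI ballI)
    show "?K \<subseteq> E - {b, b}" "I ?K" using basis_subset basis_indep indep_subset by auto
    fix z assume "z \<in> E - {b, b} - ?K"
    then have "z \<in> E - B" by blast
    then show "\<not> I (insert z ?K)" using indep_insert_iff_coord[of ?K z] zero b by auto
  qed
  then have "card ?K = matroid_rank E I"
    using cosimple_basis_of_pair_complement_card[OF cos] b basis_subset by blast
  moreover have "card B > 0" using b basis_finite card_gt_0_iff by blast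
  ultimately show False using basis_card b basis_finite by simp
qed

lemma coord_rows_differ:
  assumes cos: "cosimple_matroid E I" and b: "b \<in> B" "b' \<in> B" "b \<noteq> b'"
  shows "\<exists>x\<in>E - B. coord x b \<noteq> coord x b'"
proof (rule ccontr)
  assume "\<not> ?thesis"
  then have same: "coord x b = coord x b'" if "x \<in> E - B" for x using that by blast
  obtain x0 where x0: "x0 \<in> E - B" "coord x0 b \<noteq> \<zero>" using coord_row_nonzero[OF cos b(1)] by blast
  then have x0_unit: "coord x0 b \<in> Units R" using coord_closed b(1) field_Units by blast
  define T where "T = B - {b, b'}"
  let ?K = "insert x0 T"
  have T: "T \<subseteq> B" "B - T = {b, b'}" "finite T" using b basis_finite unfolding T_def by auto
  have "basis_of I (E - {b, b'}) ?K"
    unfolding basis_of_def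
  proof (intro conjI ballI)
    show "?K \<subseteq> E - {b, b'}" using x0(1) T(1) basis_subset b unfolding T_def by auto
    show "I ?K" using indep_insert_iff_coord[OF T(1) x0(1)] x0(2) T(2) by auto
    fix z assume "z \<in> E - {b, b'} - ?K"
    then have z: "z \<in> E - B" "z \<noteq> x0" unfolding T_def by auto
    define \<beta> where "\<beta> = coord z b \<otimes> inv (coord x0 b)"
    have \<beta>: "\<beta> \<in> carrier R" using coord_closed z(1) b(1) x0_unit unfolding \<beta>_def by simp
    have "coord z b = \<beta> \<otimes> coord x0 b"
      using coord_closed[OF z(1) b(1)] coord_closed[OF x0(1) b(1)] x0_unit
      unfolding \<beta>_def by (simp add: m_assoc)
    then have "\<forall>w\<in>B - T. coord z w = \<beta> \<otimes> coord x0 w"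
      using same[OF z(1)] same[OF x0(1)] T(2) by auto
    then show "\<not> I (insert z ?K)"
      using dependent_if_coord_proportional[OF T(1) z(1) x0(1) z(2) \<beta>] by simp
  qed
  then have "card ?K = matroid_rank E I"
    using cosimple_basis_of_pair_complement_card[OF cos] b basis_subset by blast
  moreover have "card T + 2 = card B" using card_Diff_two[OF basis_finite b] unfolding T_def .
  moreover have "x0 \<notin> T" using T(1) x0(1) by blast
  ultimately show False using T(3) basis_card by simp
qed

lemma card_basis_le:
  assumes cos: "cosimple_matroid E I" and fin: "finite (carrier R)"
  shows "card B \<le> card (carrier R) ^ card (E - B)"
proof -
  define row where "row b = restrict (\<lambda>x. coord x b) (E - B)" for b
  have "inj_on row B"
  proof (rule inj_onI, rule ccontr)
    fix b b' assume "b \<in> B" "b' \<in> B" "row b = row b'" "b \<noteq> b'"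
    then show False using coord_rows_differ[OF cos] unfolding row_def by (metis restrict_apply')
  qed
  moreover have "row ` B \<subseteq> (E - B) \<rightarrow>\<^sub>E carrier R"
    unfolding row_def using coord_closed by (intro image_subsetI) (simp add: restrict_PiE_iff)
  moreover have "finite ((E - B) \<rightarrow>\<^sub>E carrier R)" using finite_ground fin by (simp add: finite_PiE)
  ultimately have "card B \<le> card ((E - B) \<rightarrow>\<^sub>E carrier R)" by (rule card_inj_on_le)
  then show ?thesis using finite_ground by (simp add: card_PiE)
qed

end

lemma (in represented_matroid) rank_le_if_1l_uniform_cosimple:
  assumes U: "kl_uniform E I 1 l" and cos: "cosimple_matroid E I" and fin: "finite (carrier R)"
  shows "matroid_rank E I \<le> card (carrier R) ^ (card (carrier R) ^ 2 * l)"
proof -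
  obtain B where B: "I B" "card B = matroid_rank E I" by (rule exists_max_indep)
  interpret coordinatized_matroid E I R n phi B using B by unfold_locales
  have q: "1 \<le> card (carrier R)" using fin card_0_eq by fastforce
  show ?thesis
  proof (cases "2 \<le> card B")
    case True
    have "card B \<le> card (carrier R) ^ card (E - B)" using card_basis_le[OF cos fin] .
    also have "\<dots> \<le> card (carrier R) ^ (card (carrier R) ^ 2 * l)"
      using card_nonbasis_le[OF U True fin] q by (intro power_increasing)
    finally show ?thesis using B(2) by simp
  next
    case False
    then have "matroid_rank E I \<le> 1" using B(2) by simp
    also have "1 \<le> card (carrier R) ^ (card (carrier R) ^ 2 * l)" using q by simp
    finally show ?thesis .
  qed
qed

section \<open>Relabelling the ground set\<close>

lemma (in ring) lin_indep_over_reindex: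
  assumes "inj_on h X" "\<forall>x\<in>X. \<forall>i<n. phi (h x) i \<in> carrier R"
  shows "lin_indep_over R n (\<lambda>x. phi (h x)) X \<longleftrightarrow> lin_indep_over R n phi (h ` X)"
proof -
  have sum: "(\<Oplus>y\<in>h ` X. c y \<otimes> phi y i) = (\<Oplus>x\<in>X. c (h x) \<otimes> phi (h x) i)"
    if "c \<in> h ` X \<rightarrow> carrier R" "i < n" for c i
    using that assms by (intro finsum_reindex) auto
  show ?thesis
    unfolding lin_indep_over_def
  proof (intro iffI allI impI)
    fix c assume indep: "\<forall>c. c \<in> X \<rightarrow> carrier R \<longrightarrow> (\<forall>i<n. (\<Oplus>x\<in>X. c x \<otimes> phi (h x) i) = \<zero>)
        \<longrightarrow> (\<forall>x\<in>X. c x = \<zero>)"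
      and c: "c \<in> h ` X \<rightarrow> carrier R" "\<forall>i<n. (\<Oplus>y\<in>h ` X. c y \<otimes> phi y i) = \<zero>"
    have ch: "(\<lambda>x. c (h x)) \<in> X \<rightarrow> carrier R" using c(1) by auto
    have "\<forall>i<n. (\<Oplus>x\<in>X. c (h x) \<otimes> phi (h x) i) = \<zero>" using c(2) sum[OF c(1)] by simp
    then have "\<forall>x\<in>X. c (h x) = \<zero>" using indep[rule_format, OF ch] by blast
    then show "\<forall>y\<in>h ` X. c y = \<zero>" by blast
  next
    fix c assume indep: "\<forall>c. c \<in> h ` X \<rightarrow> carrier R \<longrightarrow> (\<forall>i<n. (\<Oplus>y\<in>h ` X. c y \<otimes> phi y i) = \<zero>)
        \<longrightarrow> (\<forall>y\<in>h ` X. c y = \<zero>)"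
      and c: "c \<in> X \<rightarrow> carrier R" "\<forall>i<n. (\<Oplus>x\<in>X. c x \<otimes> phi (h x) i) = \<zero>"
    define c' where "c' y = c (inv_into X h y)" for y
    have c'h: "c' (h x) = c x" if "x \<in> X" for x using assms(1) that unfolding c'_def by simp
    have c': "c' \<in> h ` X \<rightarrow> carrier R" using c(1) c'h by auto
    have "(\<Oplus>y\<in>h ` X. c' y \<otimes> phi y i) = \<zero>" if i: "i < n" for i
    proof -
      have "(\<Oplus>x\<in>X. c' (h x) \<otimes> phi (h x) i) = (\<Oplus>x\<in>X. c x \<otimes> phi (h x) i)"
        using c(1) c'h assms(2) i by (intro finsum_cong') (auto simp: Pi_iff)
      then have "(\<Oplus>y\<in>h ` X. c' y \<otimes> phi y i) = (\<Oplus>x\<in>X. c x \<otimes> phi (h x) i)"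
        using sum[OF c' i] by simp
      then show ?thesis using c(2) i by simp
    qed
    then have "\<forall>y\<in>h ` X. c' y = \<zero>" using indep[rule_format, OF c'] by blast
    then show "\<forall>x\<in>X. c x = \<zero>" using c'h by (metis imageI)
  qed
qed

locale matroid_pullback = finite_matroid E I
  for E :: "'a set" and I +
  fixes E' :: "'b set" and h :: "'b \<Rightarrow> 'a"
  assumes bij: "bij_betw h E' E"
begin

definition pull_indep :: "'b set \<Rightarrow> bool" where
  "pull_indep X \<longleftrightarrow> X \<subseteq> E' \<and> I (h ` X)"

definition preimage :: "'a set \<Rightarrow> 'b set" where
  "preimage Y = E' \<inter> h -` Y"

lemma mem_ground: "x \<in> E' \<Longrightarrow> h x \<in> E"
  using bij bij_betwE by blast

lemma image_subset: "X \<subseteq> E' \<Longrightarrow> h ` X \<subseteq> E"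
  using mem_ground by blast

lemma card_image_eq: "X \<subseteq> E' \<Longrightarrow> card (h ` X) = card X"
  using bij by (meson bij_betw_def card_image inj_on_subset)

lemma preimage_subset: "preimage Y \<subseteq> E'"
  unfolding preimage_def by blast

lemma image_preimage: "Y \<subseteq> E \<Longrightarrow> h ` preimage Y = Y"
  using bij unfolding preimage_def bij_betw_def by auto

lemma matroid_pull_indep: "matroid E' pull_indep"
  unfolding matroid_def
proof (intro conjI allI impI)
  show "finite E'" using bij finite_ground bij_betw_finite by blast
  show "pull_indep {}" unfolding pull_indep_def using indep_empty by simp
next
  fix X Y assume "pull_indep Y \<and> X \<subseteq> Y"
  then show "pull_indep X" unfolding pull_indep_def using indep_subset by (meson image_mono order_trans)
next
  fix X Y assume XY: "pull_indep X \<and> pull_indep Y \<and> card X < card Y"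
  then have "card (h ` X) < card (h ` Y)" using card_image_eq unfolding pull_indep_def by simp
  then obtain y where "y \<in> Y" "h y \<notin> h ` X" "I (insert (h y) (h ` X))"
    using indep_augment XY unfolding pull_indep_def by blast
  then show "\<exists>y\<in>Y - X. pull_indep (insert y X)" using XY unfolding pull_indep_def by auto
qed (simp add: pull_indep_def)

sublocale pull: finite_matroid E' pull_indep
  by unfold_locales (rule matroid_pull_indep)

lemma rank_pull_indep: "matroid_rank E' pull_indep = matroid_rank E I"
proof -
  obtain B where B: "I B" "card B = matroid_rank E I" by (rule exists_max_indep)
  have pre: "preimage B \<subseteq> E'" "h ` preimage B = B"
    using preimage_subset image_preimage[OF indep_subset_ground[OF B(1)]] by auto
  then have "pull_indep (preimage B)" using B(1) unfolding pull_indep_def by simp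
  moreover have "card Y \<le> card (preimage B)" if "pull_indep Y" for Y
    using that indep_card_le_rank card_image_eq pre B(2) unfolding pull_indep_def by metis
  ultimately show ?thesis using pull.rank_eqI pre B(2) card_image_eq by metis
qed

lemma simple_pull_indep: "simple_matroid E I \<Longrightarrow> simple_matroid E' pull_indep"
  unfolding simple_matroid_def pull_indep_def using mem_ground by auto

lemma cosimple_pull_indep:
  assumes "cosimple_matroid E I"
  shows "cosimple_matroid E' pull_indep"
proof (rule pull.cosimple_matroidI)
  fix x y assume xy: "x \<in> E'" "y \<in> E'"
  then have "dual_indep E I {h x, h y}"
    using assms mem_ground unfolding cosimple_matroid_def simple_matroid_def by blast
  then obtain B where B: "basis_of I E B" "{h x, h y} \<inter> B = {}" unfolding dual_indep_def by blast
  have pre: "preimage B \<subseteq> E'" "h ` preimage B = B"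
    using preimage_subset image_preimage B(1) unfolding basis_of_def by auto
  show "\<exists>K. K \<subseteq> E' - {x, y} \<and> pull_indep K \<and> card K = matroid_rank E' pull_indep"
  proof (intro exI conjI)
    show "preimage B \<subseteq> E' - {x, y}" using pre B(2) by auto
    show "pull_indep (preimage B)" using pre B(1) unfolding pull_indep_def basis_of_def by simp
    show "card (preimage B) = matroid_rank E' pull_indep"
      using card_image_eq[OF pre(1)] pre(2) basis_of_ground_card[OF B(1)] rank_pull_indep by simp
  qed
qed

lemma kl_uniform_pull_indep:
  assumes "kl_uniform E I k l"
  shows "kl_uniform E' pull_indep k l"
  unfolding kl_uniform_def pull.has_Ukk_U0l_minor_iff_witness
proof
  assume "\<exists>C A L. pull.minor_witness k l C A L"
  then obtain C A L where w: "pull_indep (C \<union> A)" "C \<inter> A = {}" "card A = k" "L \<subseteq> E' - (C \<union> A)"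
    "card L = l" "\<forall>e\<in>L. \<not> pull_indep (insert e C)"
    unfolding pull.minor_witness_def by blast
  have sub: "C \<union> A \<union> L \<subseteq> E'" using w(1,4) unfolding pull_indep_def by blast
  have inj: "inj_on h E'" using bij bij_betw_def by blast
  have "minor_witness k l (h ` C) (h ` A) (h ` L)"
    unfolding minor_witness_def
  proof (intro conjI)
    show "I (h ` C \<union> h ` A)" using w(1) unfolding pull_indep_def by (simp add: image_Un)
    show "h ` C \<inter> h ` A = {}" using w(2) sub inj by (metis image_empty inj_on_image_Int le_supE)
    show "card (h ` A) = k" "card (h ` L) = l" using card_image_eq sub w(3,5) by auto
    show "h ` L \<subseteq> E - (h ` C \<union> h ` A)"
    proof
      fix z assume "z \<in> h ` L"
      then obtain e where e: "e \<in> L" "z = h e" by blast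
      then have "e \<in> E' - (C \<union> A)" using w(4) by blast
      then have "h e \<notin> h ` (C \<union> A)" using inj sub by (simp add: inj_on_image_mem_iff)
      then show "z \<in> E - (h ` C \<union> h ` A)" using e mem_ground \<open>e \<in> E' - (C \<union> A)\<close> by auto
    qed
    show "\<forall>e\<in>h ` L. \<not> I (insert e (h ` C))" using w(6) sub unfolding pull_indep_def by auto
  qed
  then show False using assms has_Ukk_U0l_minor_if_witness unfolding kl_uniform_def by blast
qed

lemma GF_representable_pull_indep:
  assumes "GF_representable q E I"
  shows "GF_representable q E' pull_indep"
proof -
  obtain R :: "nat ring" and n phi where R: "field R" "finite (carrier R)" "card (carrier R) = q"
    and phi: "\<forall>x\<in>E. \<forall>i<n. phi x i \<in> carrier R" "\<forall>X. X \<subseteq> E \<longrightarrow> I X = lin_indep_over R n phi X"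
    using assms unfolding GF_representable_def representable_over_def by blast
  have closed: "\<forall>x\<in>E'. \<forall>i<n. phi (h x) i \<in> carrier R" using phi(1) mem_ground by blast
  have "pull_indep X \<longleftrightarrow> lin_indep_over R n (\<lambda>x. phi (h x)) X" if X: "X \<subseteq> E'" for X
  proof -
    have "inj_on h X" using bij X by (meson bij_betw_def inj_on_subset)
    moreover have "\<forall>x\<in>X. \<forall>i<n. phi (h x) i \<in> carrier R" using closed X by blast
    ultimately have "lin_indep_over R n (\<lambda>x. phi (h x)) X \<longleftrightarrow> lin_indep_over R n phi (h ` X)"
      by (rule ring.lin_indep_over_reindex[OF field.is_ring[OF R(1)]])
    also have "\<dots> \<longleftrightarrow> I (h ` X)" using phi(2) image_subset[OF X] by simp
    finally show ?thesis using X unfolding pull_indep_def by simp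
  qed
  then have "representable_over R E' pull_indep"
    unfolding representable_over_def using closed by (intro exI[of _ n] exI[of _ "\<lambda>x. phi (h x)"]) simp
  then show ?thesis unfolding GF_representable_def using R by blast
qed

lemma good_matroid_pull_indep:
  "good_matroid k l q E I \<Longrightarrow> good_matroid k l q E' pull_indep"
  unfolding good_matroid_def
  using matroid_pull_indep simple_pull_indep cosimple_pull_indep kl_uniform_pull_indep
    GF_representable_pull_indep by blast

end

lemma good_matroid_nat_copy:
  fixes E :: "'a set"
  assumes "good_matroid k l q E I"
  obtains E' :: "nat set" and I' where "good_matroid k l q E' I'" "matroid_rank E' I' = matroid_rank E I"
proof -
  interpret finite_matroid E I using assms unfolding good_matroid_def by unfold_locales blast
  obtain h :: "nat \<Rightarrow> 'a" where "bij_betw h {0..<card E} E"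
    using ex_bij_betw_nat_finite finite_ground by blast
  then interpret matroid_pullback E I "{0..<card E}" h by unfold_locales
  show ?thesis using that good_matroid_pull_indep[OF assms] rank_pull_indep by blast
qed

lemma GF_representable_card_ge_1:
  assumes "GF_representable q E I"
  shows "1 \<le> q"
proof -
  obtain R :: "nat ring" where R: "field R" "finite (carrier R)" "card (carrier R) = q"
    using assms unfolding GF_representable_def by blast
  then have "\<zero>\<^bsub>R\<^esub> \<in> carrier R" by (simp add: field.is_ring ring.ring_simprules(2))
  then have "card (carrier R) > 0" using R(2) card_gt_0_iff by blast
  then show ?thesis using R(3) by simp
qed

lemma GF_representable_restriction:
  assumes "GF_representable q E I" "Z \<subseteq> E"
  shows "GF_representable q Z (restriction I Z)"
proof -
  obtain R :: "nat ring" and n phi where R: "field R" "finite (carrier R)" "card (carrier R) = q"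
    and phi: "\<forall>x\<in>E. \<forall>i<n. phi x i \<in> carrier R" "\<forall>X. X \<subseteq> E \<longrightarrow> I X = lin_indep_over R n phi X"
    using assms(1) unfolding GF_representable_def representable_over_def by blast
  have "representable_over R Z (restriction I Z)"
    unfolding representable_over_def
  proof (intro exI[of _ n] exI[of _ phi] conjI allI impI)
    show "\<forall>x\<in>Z. \<forall>i<n. phi x i \<in> carrier R" using phi(1) assms(2) by blast
    fix X assume "X \<subseteq> Z"
    then show "restriction I Z X \<longleftrightarrow> lin_indep_over R n phi X" using phi(2) assms(2) by auto
  qed
  then show ?thesis unfolding GF_representable_def using R by blast
qed

lemma good_matroid_1l_rank_le:
  assumes "good_matroid 1 l q E I"
  shows "matroid_rank E I \<le> q ^ (q ^ 2 * l)"
proof -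
  obtain R :: "nat ring" and n phi where R: "field R" "finite (carrier R)" "card (carrier R) = q"
    and phi: "\<forall>x\<in>E. \<forall>i<n. phi x i \<in> carrier R" "\<forall>X. X \<subseteq> E \<longrightarrow> I X = lin_indep_over R n phi X"
    using assms unfolding good_matroid_def GF_representable_def representable_over_def by blast
  have "represented_matroid E I R n phi"
  proof (intro represented_matroid.intro finite_matroid.intro represented_matroid_axioms.intro)
    show "matroid E I" using assms unfolding good_matroid_def by blast
    show "field R" by (fact R(1))
  qed (use phi in auto)
  then show ?thesis
    using represented_matroid.rank_le_if_1l_uniform_cosimple[of E I R n phi l] R(2,3) assms
    unfolding good_matroid_def by simp
qed

lemma good_matroid_reduction:
  assumes good: "good_matroid k l q E I" and "k \<ge> 1" "\<not> kl_uniform E I (k - 1) (l + 1)"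
  obtains Z where "Z \<subseteq> E" "good_matroid 1 l q Z (restriction I Z)"
    "matroid_rank E I \<le> matroid_rank Z (restriction I Z) + (k - 1)"
proof -
  interpret finite_matroid E I using good unfolding good_matroid_def by unfold_locales blast
  obtain Z where Z: "Z \<subseteq> E" "cosimple_matroid Z (restriction I Z)" "kl_uniform Z (restriction I Z) 1 l"
    "matroid_rank E I \<le> matroid_rank Z (restriction I Z) + (k - 1)"
    using reduction_to_1l_uniform assms unfolding good_matroid_def by blast
  have "simple_matroid Z (restriction I Z)"
    using good Z(1) unfolding good_matroid_def simple_matroid_def by auto
  then have "good_matroid 1 l q Z (restriction I Z)"
    using Z matroid_restriction GF_representable_restriction good unfolding good_matroid_def by blast
  then show ?thesis using that Z(1,4) by blast
qed

lemma good_matroid_rank_le: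
  assumes "k \<ge> 1" "good_matroid k l q E I"
  shows "matroid_rank E I \<le> q ^ (q ^ 2 * (l + k)) + k"
  using assms
proof (induction k arbitrary: l rule: nat_induct_at_least)
  case base
  have "q \<ge> 1" using base GF_representable_card_ge_1 unfolding good_matroid_def by blast
  then have "q ^ (q ^ 2 * l) \<le> q ^ (q ^ 2 * (l + 1))" by (intro power_increasing mult_le_mono2) auto
  then show ?case using good_matroid_1l_rank_le[OF base] by simp
next
  case (Suc k)
  have q: "q \<ge> 1" using Suc.prems GF_representable_card_ge_1 unfolding good_matroid_def by blast
  show ?case
  proof (cases "kl_uniform E I k (l + 1)")
    case True
    then have "good_matroid k (l + 1) q E I" using Suc.prems unfolding good_matroid_def by blast
    then show ?thesis using Suc.IH by fastforce
  next
    case False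
    then obtain Z where Z: "good_matroid 1 l q Z (restriction I Z)"
      "matroid_rank E I \<le> matroid_rank Z (restriction I Z) + k"
      using good_matroid_reduction[OF Suc.prems] by auto
    have "q ^ (q ^ 2 * l) \<le> q ^ (q ^ 2 * (l + Suc k))" using q by (intro power_increasing mult_le_mono2) auto
    then show ?thesis using Z good_matroid_1l_rank_le[OF Z(1)] by simp
  qed
qed

lemma bdd_above_good_ranks:
  assumes "k \<ge> 1"
  shows "bdd_above {matroid_rank E I | (E :: nat set) I. good_matroid k l q E I}"
  using good_matroid_rank_le[OF assms] by (intro bdd_aboveI[where M = "q ^ (q ^ 2 * (l + k)) + k"]) blast

lemma rank_le_fmax:
  assumes "k \<ge> 1" "good_matroid k l q (E :: nat set) I"
  shows "matroid_rank E I \<le> fmax k l q"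
  unfolding fmax_def using assms(2) by (intro cSup_upper bdd_above_good_ranks[OF assms(1)]) blast

lemma fmax_recursion:
  assumes "k \<ge> 2"
  shows "fmax k l q \<le> max (fmax (k - 1) (l + 1) q) (fmax 1 l q + (k - 1))"
proof (cases "{matroid_rank E I | (E :: nat set) I. good_matroid k l q E I} = {}")
  case True
  then show ?thesis unfolding fmax_def by simp \<comment> \<open>\<open>Sup {} = 0\<close> in \<open>nat\<close>\<close>
next
  case False
  show ?thesis
    unfolding fmax_def[of k]
  proof (rule cSup_least[OF False], clarify)
    fix E :: "nat set" and I assume good: "good_matroid k l q E I"
    show "matroid_rank E I \<le> max (fmax (k - 1) (l + 1) q) (fmax 1 l q + (k - 1))"
    proof (cases "kl_uniform E I (k - 1) (l + 1)")
      case True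
      then have "good_matroid (k - 1) (l + 1) q E I" using good unfolding good_matroid_def by blast
      then show ?thesis using rank_le_fmax[of "k - 1"] assms by fastforce
    next
      case False
      then obtain Z where "good_matroid 1 l q Z (restriction I Z)"
        "matroid_rank E I \<le> matroid_rank Z (restriction I Z) + (k - 1)"
        using good_matroid_reduction[OF good] assms by auto
      then show ?thesis using rank_le_fmax[of 1] by fastforce
    qed
  qed
qed

theorem proposition2p3:
  fixes k l q :: nat
  assumes "k \<ge> 1" and "l \<ge> 1" and "prime_power q"
  shows "bdd_above {matroid_rank E I | (E :: nat set) I. good_matroid k l q E I}
    \<and> (\<forall>(E :: 'a set) I. good_matroid k l q E I \<longrightarrow> matroid_rank E I \<le> fmax k l q)
    \<and> (k \<ge> 2 \<longrightarrow> fmax k l q \<le> max (fmax (k - 1) (l + 1) q) (fmax 1 l q + (k - 1)))"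
proof (intro conjI allI impI)
  show "bdd_above {matroid_rank E I | (E :: nat set) I. good_matroid k l q E I}"
    using bdd_above_good_ranks[OF assms(1)] .
next
  fix E :: "'a set" and I
  assume "good_matroid k l q E I"
  then obtain E' :: "nat set" and I' where "good_matroid k l q E' I'" "matroid_rank E' I' = matroid_rank E I"
    by (rule good_matroid_nat_copy)
  then show "matroid_rank E I \<le> fmax k l q" using rank_le_fmax[OF assms(1)] by metis
next
  assume "k \<ge> 2"
  then show "fmax k l q \<le> max (fmax (k - 1) (l + 1) q) (fmax 1 l q + (k - 1))"
    by (rule fmax_recursion)
qed

end
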